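(* Let $(\nu_n)_{n=1}^\infty$ be an increasing sequence of positive integers and let $\alpha=\liminf_{n\to\infty}\frac{\nu_n}{n}\in[0,\infty]$. Let \[F((\nu_n)_{n=1}^\infty)=\{x\in J\colon a_{n}(x),\ldots,a_{n+\nu_n-1}(x)\ \text{is an arithmetic progression for infinitely many}\ n\geq1\}.\] Then $\dim_{\rm H} F((\nu_n)_{n=1}^\infty)\le \frac{1}{2(1+\alpha)}$ (interpreted as $0$ when $\alpha=\infty$).
   Context: Every irrational $x\in(0,1)$ has a regular continued fraction expansion with partial quotients $a_n(x)\in\mathbb N$, $n\ge1$. $J=\{x\in(0,1)\setminus\mathbb Q\colon a_n(x)<a_{n+1}(x)\text{ for every }n\ge1\}$. $\dim_{\rm H}$ denotes Hausdorff dimension in $[0,1]$. *)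

theory Defs
  imports "HOL-Analysis.Analysis"
begin

definition gauss_map :: "real \<Rightarrow> real" where
  "gauss_map x = frac (1 / x)"

definition cf_a :: "nat \<Rightarrow> real \<Rightarrow> nat" where
  "cf_a n x = nat \<lfloor>1 / ((gauss_map ^^ (n - 1)) x)\<rfloor>"

definition J_set :: "real set" where
  "J_set = {x. 0 < x \<and> x < 1 \<and> x \<notin> \<rat> \<and> (\<forall>n\<ge>1. cf_a n x < cf_a (Suc n) x)}"

definition cf_AP :: "real \<Rightarrow> nat \<Rightarrow> nat \<Rightarrow> bool" where
  "cf_AP x n m \<longleftrightarrow> (\<exists>d::int. \<forall>i<m. int (cf_a (n + i) x) = int (cf_a n x) + int i * d)"

definition F_set :: "(nat \<Rightarrow> nat) \<Rightarrow> real set" where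
  "F_set \<nu> = {x \<in> J_set. infinite {n. n \<ge> 1 \<and> cf_AP x n (\<nu> n)}}"

definition hausdorff_content :: "real \<Rightarrow> real \<Rightarrow> real set \<Rightarrow> ennreal" where
  "hausdorff_content s \<delta> A =
     (INF C \<in> {C :: nat \<Rightarrow> real set. A \<subseteq> (\<Union>n. C n) \<and>
                 (\<forall>n. bounded (C n) \<and> diameter (C n) \<le> \<delta>)}.
        (\<Sum>n. ennreal (diameter (C n) powr s)))"

definition hausdorff_measure :: "real \<Rightarrow> real set \<Rightarrow> ennreal" where
  "hausdorff_measure s A = (SUP \<delta> \<in> {0<..}. hausdorff_content s \<delta> A)"

definition hausdorff_dim :: "real set \<Rightarrow> real" where
  "hausdorff_dim A = Inf {s. 0 \<le> s \<and> hausdorff_measure s A = 0}"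

end

theory Submission
  imports Defs
begin

(* Every point of F_set lies, for infinitely many n, in the set of x in J for which
   a_n(x), ..., a_(n+nu_n-1)(x) is an arithmetic progression, so by a Hausdorff-Cantelli
   argument it suffices to bound the s-dimensional Hausdorff content (covers of diameter at
   most 1) of these sets by a summable sequence.  The inverse branches t -> 1/(b+t) of the
   Gauss map contract by 1/b^2, so a cylinder with partial quotients q_1, ..., q_m has content
   at most prod q_i^(-2s).  Summing over the strictly increasing prefixes
   a_1 < ... < a_(n-1) < a_n = a gives the factor W(a)^(n-1)/(n-1)! with
   W(a) = sum_(b<a) b^(-2s), and a progression a, a+d, ... of length m contributes at most
   a^(-2s(m-K)) d^(-2) once 2sK >= 2.  For s > 1/2 the weight W is bounded, and already J has
   content zero.  For 1/(2(1+alpha)) < s < 1/2 one has W(a) <= a^(1-2s)/(1-2s), and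
   nu_n >= beta n with 2s(1+beta) > 1 turns the sum over a into one dominated by sum a^(-2),
   leaving a bound C^(n-1)/(n-1)!, which is summable. *)

lemma power_Suc_add_ge:
  fixes y h :: real
  assumes "0 \<le> y" "0 \<le> h"
  shows "y ^ Suc k + real (Suc k) * h * y ^ k \<le> (y + h) ^ Suc k"
proof (induction k)
  case 0
  show ?case
    by simp
next
  case (Suc k)
  have "y ^ Suc (Suc k) + real (Suc (Suc k)) * h * y ^ Suc k
      \<le> (y + h) * (y ^ Suc k + real (Suc k) * h * y ^ k)"
    using assms by (simp add: algebra_simps)
  also have "\<dots> \<le> (y + h) * (y + h) ^ Suc k"
    using Suc assms by (intro mult_left_mono) auto
  finally show ?case
    by simp
qed

lemma sum_mult_tail_power_le:
  fixes w :: "nat \<Rightarrow> real"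
  assumes w: "\<And>b. 0 \<le> w b"
  shows "(\<Sum>b\<in>{c<..<a}. w b * (\<Sum>b'\<in>{b<..<a}. w b') ^ k)
    \<le> (\<Sum>b\<in>{c<..<a}. w b) ^ Suc k / real (Suc k)"
proof (induction "a - c" arbitrary: c)
  case 0
  then show ?case
    by simp
next
  case (Suc d)
  show ?case
  proof (cases "Suc c < a")
    case False
    then have "{c<..<a} = {}"
      by auto
    then show ?thesis
      by simp
  next
    case True
    let ?W = "\<lambda>c. \<Sum>b\<in>{c<..<a}. w b"
    have split: "{c<..<a} = insert (Suc c) {Suc c<..<a}"
      using True by auto
    have "(\<Sum>b\<in>{c<..<a}. w b * ?W b ^ k) = w (Suc c) * ?W (Suc c) ^ k + (\<Sum>b\<in>{Suc c<..<a}. w b * ?W b ^ k)"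
      unfolding split by simp
    also have "\<dots> \<le> w (Suc c) * ?W (Suc c) ^ k + ?W (Suc c) ^ Suc k / real (Suc k)"
      using Suc.hyps(1)[of "Suc c"] Suc.hyps(2) by simp
    also have "\<dots> = (?W (Suc c) ^ Suc k + real (Suc k) * w (Suc c) * ?W (Suc c) ^ k) / real (Suc k)"
      by (simp add: field_simps)
    also have "\<dots> \<le> (?W (Suc c) + w (Suc c)) ^ Suc k / real (Suc k)"
      by (intro divide_right_mono power_Suc_add_ge sum_nonneg w) auto
    also have "?W (Suc c) + w (Suc c) = ?W c"
      unfolding split by simp
    finally show ?thesis .
  qed
qed

lemma powr_sub_powr_ge:
  fixes p x :: real
  assumes p: "0 < p" "p \<le> 1" and x: "1 \<le> x"
  shows "p * x powr (p - 1) \<le> x powr p - (x - 1) powr p"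
proof (cases "x = 1")
  case True
  then show ?thesis
    using p by simp
next
  case False
  with x have x1: "1 < x"
    by simp
  have "((\<lambda>t. t powr p) has_real_derivative p * t powr (p - 1)) (at t)" if "x - 1 \<le> t" for t
    using that x1 by (intro has_real_derivative_powr) simp
  then obtain z where z: "x - 1 < z" "z < x"
    and eq: "x powr p - (x - 1) powr p = (x - (x - 1)) * (p * z powr (p - 1))"
    using MVT2[of "x - 1" x "\<lambda>t. t powr p" "\<lambda>t. p * t powr (p - 1)"] by auto
  have "x powr (p - 1) \<le> z powr (p - 1)"
    using z x1 p by (intro powr_mono2') auto
  then show ?thesis
    unfolding eq using p by simp
qed

lemma sum_powr_lessThan_Suc_le:
  assumes s: "0 < s" "s < 1/2"
  shows "(\<Sum>b\<in>{0<..<Suc n}. real b powr (-2 * s)) \<le> real n powr (1 - 2 * s) / (1 - 2 * s)"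
proof (induction n)
  case 0
  show ?case
    by simp
next
  case (Suc n)
  define p where "p = 1 - 2 * s"
  have p: "0 < p" "p \<le> 1" "p - 1 = -2 * s"
    using s by (auto simp: p_def)
  have "p * real (Suc n) powr (-2 * s) \<le> real (Suc n) powr p - real n powr p"
    using powr_sub_powr_ge[OF p(1,2), of "real (Suc n)"] unfolding p(3) by simp
  then have step: "real (Suc n) powr (-2 * s) \<le> (real (Suc n) powr p - real n powr p) / p"
    using p by (simp add: pos_le_divide_eq mult.commute)
  have "{0<..<Suc (Suc n)} = insert (Suc n) {0<..<Suc n}"
    by auto
  then have "(\<Sum>b\<in>{0<..<Suc (Suc n)}. real b powr (-2 * s))
      = real (Suc n) powr (-2 * s) + (\<Sum>b\<in>{0<..<Suc n}. real b powr (-2 * s))"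
    by simp
  also have "\<dots> \<le> (real (Suc n) powr p - real n powr p) / p + real n powr p / p"
    using step Suc.IH unfolding p_def by linarith
  also have "\<dots> = real (Suc n) powr p / p"
    by (simp add: diff_divide_distrib)
  finally show ?case
    unfolding p_def .
qed

lemma sum_powr_le:
  assumes s: "0 < s" "s < 1/2"
  shows "(\<Sum>b\<in>{0<..<a}. real b powr (-2 * s)) \<le> real a powr (1 - 2 * s) / (1 - 2 * s)"
proof (cases a)
  case 0
  then show ?thesis
    by simp
next
  case (Suc n)
  have "(\<Sum>b\<in>{0<..<a}. real b powr (-2 * s)) \<le> real n powr (1 - 2 * s) / (1 - 2 * s)"
    using sum_powr_lessThan_Suc_le[OF s] Suc by simp
  also have "\<dots> \<le> real a powr (1 - 2 * s) / (1 - 2 * s)"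
    using Suc s by (intro divide_right_mono powr_mono2) auto
  finally show ?thesis .
qed

lemma sum_powr_power_mult_le:
  assumes s: "0 < s" "s < 1/2" and r: "(1 - 2 * s) * real k - 2 * s * r \<le> -2"
  shows "(\<Sum>b\<in>{0<..<a}. real b powr (-2 * s)) ^ k * real a powr (-2 * s * r)
    \<le> (1 / (1 - 2 * s)) ^ k * real a powr (-2)"
proof (cases "a = 0")
  case True
  then show ?thesis
    by simp
next
  case False
  define p where "p = 1 - 2 * s"
  have p: "0 < p"
    using s by (simp add: p_def)
  have a: "1 \<le> real a"
    using False by simp
  have "(\<Sum>b\<in>{0<..<a}. real b powr (-2 * s)) ^ k \<le> (real a powr p / p) ^ k"
    unfolding p_def using s by (intro power_mono sum_powr_le sum_nonneg) auto
  also have "\<dots> = (1 / p) ^ k * real a powr (real k * p)"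
    using a by (simp add: power_divide powr_power)
  finally have "(\<Sum>b\<in>{0<..<a}. real b powr (-2 * s)) ^ k * real a powr (-2 * s * r)
      \<le> (1 / p) ^ k * real a powr (real k * p) * real a powr (-2 * s * r)"
    by (intro mult_right_mono) auto
  also have "\<dots> = (1 / p) ^ k * real a powr (p * real k - 2 * s * r)"
    by (simp add: powr_add[symmetric] algebra_simps)
  also have "\<dots> \<le> (1 / p) ^ k * real a powr (-2)"
    using r a p by (intro mult_left_mono powr_mono) (auto simp: p_def)
  finally show ?thesis
    by (simp add: p_def)
qed

(* The factors with index 1..K are bounded through the common difference d+1, the other m-K
   through the first term a. *)
lemma prod_AP_powr_le:
  assumes s: "0 \<le> s" and K: "2 \<le> 2 * s * real K" "K < m"
  shows "(\<Prod>i<m. real (a + i * Suc d) powr (-2 * s))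
    \<le> real a powr (-2 * s * real (m - K)) * real (Suc d) powr (-2)"
proof -
  let ?f = "\<lambda>i. real (a + i * Suc d) powr (-2 * s)"
  show ?thesis
  proof (cases "a = 0")
    case True
    then have "(\<Prod>i<m. ?f i) = 0"
      using K(2) by (simp add: prod_zero_iff) (rule bexI[of _ 0]; simp)
    then show ?thesis
      by (simp del: prod_zero_iff)
  next
    case False
    have sub: "{1..K} \<subseteq> {..<m}"
      using K(2) by auto
    have "(\<Prod>i<m. ?f i) = (\<Prod>i\<in>{..<m} - {1..K}. ?f i) * (\<Prod>i\<in>{1..K}. ?f i)"
      by (rule prod.subset_diff[OF sub]) auto
    also have "\<dots> \<le> (\<Prod>i\<in>{..<m} - {1..K}. real a powr (-2 * s))
        * (\<Prod>i\<in>{1..K}. real (Suc d) powr (-2 * s))"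
    proof (intro mult_mono prod_mono conjI prod_nonneg)
      fix i
      show "?f i \<le> real a powr (-2 * s)"
        using False s by (intro powr_mono2') auto
      assume "i \<in> {1..K}"
      then have "1 * Suc d \<le> i * Suc d"
        by (intro mult_le_mono1) auto
      then have "Suc d \<le> a + i * Suc d"
        by (metis mult_1 trans_le_add2)
      then have "real (Suc d) \<le> real (a + i * Suc d)"
        by (simp only: of_nat_le_iff)
      then show "?f i \<le> real (Suc d) powr (-2 * s)"
        using s by (intro powr_mono2') auto
    qed auto
    also have "\<dots> = real a powr (-2 * s * real (m - K)) * real (Suc d) powr (-2 * s * real K)"
      using False sub by (simp add: card_Diff_subset powr_power mult.commute)
    also have "\<dots> \<le> real a powr (-2 * s * real (m - K)) * real (Suc d) powr (-2)"
      using K(1) by (intro mult_left_mono powr_mono) auto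
    finally show ?thesis .
  qed
qed

lemma summable_power_div_fact: "summable (\<lambda>k. c * x ^ k / fact k :: real)"
proof -
  have "summable (\<lambda>k. c * (inverse (fact k) * x ^ k))"
    by (intro summable_mult summable_exp)
  then show ?thesis
    by (simp add: divide_inverse mult_ac)
qed

lemma suminf_ennreal_le_mult_suminf:
  fixes t :: "nat \<Rightarrow> ennreal" and f :: "nat \<Rightarrow> real"
  assumes f: "summable f" "\<And>n. 0 \<le> f n" and c: "0 \<le> c"
    and t: "\<And>n. t n \<le> ennreal (c * f n)"
  shows "(\<Sum>n. t n) \<le> ennreal (c * suminf f)"
proof -
  have "(\<Sum>n. t n) \<le> (\<Sum>n. ennreal (c * f n))"
    by (intro suminf_le summableI t)
  also have "\<dots> = ennreal (\<Sum>n. c * f n)"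
    using f c by (intro suminf_ennreal2 summable_mult) auto
  also have "(\<Sum>n. c * f n) = c * suminf f"
    by (rule suminf_mult[OF f(1)])
  finally show ?thesis .
qed

section \<open>Hausdorff content\<close>

lemma bounded_diameter_lipschitz_image:
  fixes f :: "real \<Rightarrow> real"
  assumes f: "L-lipschitz_on S f" and C: "bounded C"
  shows "bounded (f ` (C \<inter> S))" "diameter (f ` (C \<inter> S)) \<le> L * diameter C"
proof -
  have dist_le: "dist u v \<le> L * diameter C"
    if uv: "u \<in> f ` (C \<inter> S)" "v \<in> f ` (C \<inter> S)" for u v
  proof -
    obtain x y where "x \<in> C \<inter> S" "y \<in> C \<inter> S" "u = f x" "v = f y"
      using uv by blast
    then show ?thesis
      using lipschitz_onD[OF f] lipschitz_on_nonneg[OF f] diameter_bounded_bound[OF C]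
      by (meson IntD1 IntD2 mult_left_mono order_trans)
  qed
  then show "bounded (f ` (C \<inter> S))"
    unfolding bounded_def by blast
  show "diameter (f ` (C \<inter> S)) \<le> L * diameter C"
    using dist_le diameter_ge_0[OF C] lipschitz_on_nonneg[OF f]
    by (intro diameter_le) (auto simp: dist_norm)
qed

lemma hausdorff_content_le_cover:
  fixes C :: "nat \<Rightarrow> real set"
  assumes "A \<subseteq> (\<Union>n. C n)" "\<And>n. bounded (C n)" "\<And>n. diameter (C n) \<le> \<delta>"
  shows "hausdorff_content s \<delta> A \<le> (\<Sum>n. ennreal (diameter (C n) powr s))"
  unfolding hausdorff_content_def using assms by (intro INF_lower) auto

lemma hausdorff_content_lessE:
  assumes "hausdorff_content s \<delta> A < x"
  obtains C :: "nat \<Rightarrow> real set" where "A \<subseteq> (\<Union>n. C n)" "\<And>n. bounded (C n)"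
    "\<And>n. diameter (C n) \<le> \<delta>" "(\<Sum>n. ennreal (diameter (C n) powr s)) < x"
  using assms unfolding hausdorff_content_def INF_less_iff by blast

lemma hausdorff_content_approx_cover:
  assumes "hausdorff_content s \<delta> A < top" "0 < e"
  shows "\<exists>C :: nat \<Rightarrow> real set. A \<subseteq> (\<Union>n. C n) \<and> (\<forall>n. bounded (C n) \<and> diameter (C n) \<le> \<delta>) \<and>
    (\<Sum>n. ennreal (diameter (C n) powr s)) < hausdorff_content s \<delta> A + ennreal e"
proof -
  have "hausdorff_content s \<delta> A < hausdorff_content s \<delta> A + ennreal e"
    using assms ennreal_add_left_cancel_less[of _ 0 "ennreal e"] by simp
  then show ?thesis
    by (elim hausdorff_content_lessE) blast
qed

lemma hausdorff_content_mono:
  "A \<subseteq> B \<Longrightarrow> hausdorff_content s \<delta> A \<le> hausdorff_content s \<delta> B"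
  unfolding hausdorff_content_def by (rule INF_superset_mono) auto

lemma hausdorff_content_le_diameter:
  assumes "bounded A" "diameter A \<le> \<delta>"
  shows "hausdorff_content s \<delta> A \<le> ennreal (diameter A powr s)"
proof -
  let ?C = "\<lambda>n::nat. if n = 0 then A else {}"
  have "0 \<le> \<delta>"
    using assms diameter_ge_0 order_trans by blast
  then have "hausdorff_content s \<delta> A \<le> (\<Sum>n. ennreal (diameter (?C n) powr s))"
    using assms by (intro hausdorff_content_le_cover) auto
  also have "\<dots> = ennreal (diameter A powr s)"
    by (subst suminf_finite[of "{0}"]) auto
  finally show ?thesis .
qed

lemma hausdorff_content_empty [simp]: "0 \<le> \<delta> \<Longrightarrow> hausdorff_content s \<delta> {} = 0"
  using hausdorff_content_le_diameter[of "{}" \<delta> s] by simp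

lemma hausdorff_content_UN_le_covers:
  fixes A :: "nat \<Rightarrow> real set" and C :: "nat \<Rightarrow> nat \<Rightarrow> real set"
  assumes C: "\<And>k. A k \<subseteq> (\<Union>n. C k n)" "\<And>k n. bounded (C k n)" "\<And>k n. diameter (C k n) \<le> \<delta>"
  shows "hausdorff_content s \<delta> (\<Union>k. A k) \<le> (\<Sum>k. \<Sum>n. ennreal (diameter (C k n) powr s))"
proof -
  define D where "D i = C (fst (prod_decode i)) (snd (prod_decode i))" for i
  have "(\<Union>k. A k) \<subseteq> (\<Union>i. D i)"
  proof
    fix x
    assume "x \<in> (\<Union>k. A k)"
    then obtain k n where "x \<in> C k n"
      using C(1) by blast
    then have "x \<in> D (prod_encode (k, n))"
      by (simp add: D_def)
    then show "x \<in> (\<Union>i. D i)"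
      by blast
  qed
  then have "hausdorff_content s \<delta> (\<Union>k. A k) \<le> (\<Sum>i. ennreal (diameter (D i) powr s))"
    by (rule hausdorff_content_le_cover) (simp_all add: D_def C(2,3))
  also have "\<dots> = (\<Sum>k. \<Sum>n. ennreal (diameter (C k n) powr s))"
    unfolding D_def
    by (rule suminf_ennreal_2dimen[where f = "\<lambda>p. ennreal (diameter (C (fst p) (snd p)) powr s)"]) simp
  finally show ?thesis .
qed

lemma hausdorff_content_UN_le:
  fixes A :: "nat \<Rightarrow> real set"
  shows "hausdorff_content s \<delta> (\<Union>k. A k) \<le> (\<Sum>k. hausdorff_content s \<delta> (A k))"
proof (rule ennreal_le_epsilon)
  fix e :: real
  assume fin: "(\<Sum>k. hausdorff_content s \<delta> (A k)) < top" and e: "0 < e"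
  define e' where "e' = (\<lambda>k. e * (1/2) ^ Suc k)"
  have "\<exists>C. A k \<subseteq> (\<Union>n. C n) \<and> (\<forall>n. bounded (C n) \<and> diameter (C n) \<le> \<delta>) \<and>
      (\<Sum>n. ennreal (diameter (C n) powr s)) < hausdorff_content s \<delta> (A k) + ennreal (e' k)" for k
  proof (rule hausdorff_content_approx_cover)
    show "hausdorff_content s \<delta> (A k) < top"
      using fin ennreal_suminf_lessD by blast
    show "0 < e' k"
      using e by (simp add: e'_def)
  qed
  then obtain C where C: "\<And>k. A k \<subseteq> (\<Union>n. C k n)" "\<And>k n. bounded (C k n)"
    "\<And>k n. diameter (C k n) \<le> \<delta>"
    "\<And>k. (\<Sum>n. ennreal (diameter (C k n) powr s)) < hausdorff_content s \<delta> (A k) + ennreal (e' k)"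
    by metis
  have "hausdorff_content s \<delta> (\<Union>k. A k) \<le> (\<Sum>k. \<Sum>n. ennreal (diameter (C k n) powr s))"
    by (rule hausdorff_content_UN_le_covers[OF C(1-3)])
  also have "\<dots> \<le> (\<Sum>k. hausdorff_content s \<delta> (A k) + ennreal (e' k))"
    by (intro suminf_le summableI less_imp_le C(4))
  also have "\<dots> = (\<Sum>k. hausdorff_content s \<delta> (A k)) + (\<Sum>k. ennreal (e' k))"
    by (intro suminf_add[symmetric] summableI)
  also have "(\<Sum>k. ennreal (e' k)) = ennreal e"
  proof (rule suminf_ennreal_eq)
    show "e' sums e"
      using sums_mult[OF power_half_series, of e] by (simp add: e'_def)
  qed (use e in \<open>simp add: e'_def\<close>)
  finally show "hausdorff_content s \<delta> (\<Union>k. A k) \<le> (\<Sum>k. hausdorff_content s \<delta> (A k)) + ennreal e" .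
qed

lemma hausdorff_content_Un_le:
  assumes "0 \<le> \<delta>"
  shows "hausdorff_content s \<delta> (A \<union> B) \<le> hausdorff_content s \<delta> A + hausdorff_content s \<delta> B"
proof -
  let ?F = "\<lambda>k::nat. if k = 0 then A else if k = 1 then B else {}"
  have "A \<union> B = (\<Union>k. ?F k)"
    by (auto split: if_splits)
  then have "hausdorff_content s \<delta> (A \<union> B) \<le> (\<Sum>k. hausdorff_content s \<delta> (?F k))"
    using hausdorff_content_UN_le[of s \<delta> ?F] by simp
  also have "\<dots> = (\<Sum>k\<in>{0,1}. hausdorff_content s \<delta> (?F k))"
    using assms by (intro suminf_finite) auto
  finally show ?thesis
    by simp
qed

lemma hausdorff_content_UN_finite_le:
  assumes "finite I" "0 \<le> \<delta>"
  shows "hausdorff_content s \<delta> (\<Union>i\<in>I. A i) \<le> (\<Sum>i\<in>I. hausdorff_content s \<delta> (A i))"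
  using assms(1)
proof (induction I rule: finite_induct)
  case empty
  show ?case
    using assms(2) by simp
next
  case (insert i I)
  have "hausdorff_content s \<delta> (\<Union>j\<in>insert i I. A j)
      \<le> hausdorff_content s \<delta> (A i) + hausdorff_content s \<delta> (\<Union>j\<in>I. A j)"
    using hausdorff_content_Un_le[OF assms(2)] by simp
  also have "\<dots> \<le> hausdorff_content s \<delta> (A i) + (\<Sum>j\<in>I. hausdorff_content s \<delta> (A j))"
    using insert.IH by (rule add_left_mono)
  finally show ?case
    using insert by simp
qed

lemma hausdorff_content_lipschitz_image_le_cover:
  fixes f :: "real \<Rightarrow> real" and C :: "nat \<Rightarrow> real set"
  assumes f: "L-lipschitz_on S f" "L \<le> 1" and A: "A \<subseteq> S" and s: "0 \<le> s"
    and C: "A \<subseteq> (\<Union>n. C n)" "\<And>n. bounded (C n)" "\<And>n. diameter (C n) \<le> \<delta>"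
  shows "hausdorff_content s \<delta> (f ` A) \<le> ennreal (L powr s) * (\<Sum>n. ennreal (diameter (C n) powr s))"
proof -
  have L: "0 \<le> L"
    by (rule lipschitz_on_nonneg[OF f(1)])
  define D where "D n = f ` (C n \<inter> S)" for n
  note D = bounded_diameter_lipschitz_image[OF f(1) C(2), folded D_def]
  have "f ` A \<subseteq> (\<Union>n. D n)"
  proof
    fix y
    assume "y \<in> f ` A"
    then obtain x n where "x \<in> A" "x \<in> C n" "y = f x"
      using C(1) by blast
    then have "y \<in> D n"
      using A unfolding D_def by auto
    then show "y \<in> (\<Union>n. D n)"
      by blast
  qed
  then have "hausdorff_content s \<delta> (f ` A) \<le> (\<Sum>n. ennreal (diameter (D n) powr s))"
  proof (rule hausdorff_content_le_cover)
    show "diameter (D n) \<le> \<delta>" for n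
      using D(2)[of n] C(3)[of n] diameter_ge_0[OF C(2), of n] L f(2)
        mult_left_le_one_le[of "diameter (C n)" L] by linarith
  qed (rule D(1))
  also have "\<dots> \<le> (\<Sum>n. ennreal (L powr s) * ennreal (diameter (C n) powr s))"
  proof (intro suminf_le summableI)
    fix n
    have "diameter (D n) powr s \<le> (L * diameter (C n)) powr s"
      using D diameter_ge_0[OF D(1)] s by (intro powr_mono2) auto
    also have "\<dots> = L powr s * diameter (C n) powr s"
      using L diameter_ge_0[OF C(2)] by (simp add: powr_mult)
    finally show "ennreal (diameter (D n) powr s) \<le> ennreal (L powr s) * ennreal (diameter (C n) powr s)"
      by (simp add: ennreal_mult'[symmetric] ennreal_leI)
  qed
  also have "\<dots> = ennreal (L powr s) * (\<Sum>n. ennreal (diameter (C n) powr s))"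
    by simp
  finally show ?thesis .
qed

lemma hausdorff_content_lipschitz_image_le:
  fixes f :: "real \<Rightarrow> real"
  assumes f: "L-lipschitz_on S f" and L: "0 < L" "L \<le> 1" and A: "A \<subseteq> S" and s: "0 \<le> s"
  shows "hausdorff_content s \<delta> (f ` A) \<le> ennreal (L powr s) * hausdorff_content s \<delta> A"
proof (rule ennreal_le_epsilon)
  fix e :: real
  assume fin: "ennreal (L powr s) * hausdorff_content s \<delta> A < top" and e: "0 < e"
  have Ls: "0 < L powr s"
    using L by simp
  then have "hausdorff_content s \<delta> A < top"
    using fin by (auto simp: ennreal_mult_less_top)
  moreover have "0 < e / L powr s"
    using e Ls by simp
  ultimately obtain C where C: "A \<subseteq> (\<Union>n. C n)" "\<forall>n. bounded (C n) \<and> diameter (C n) \<le> \<delta>"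
    "(\<Sum>n. ennreal (diameter (C n) powr s)) < hausdorff_content s \<delta> A + ennreal (e / L powr s)"
    by (metis hausdorff_content_approx_cover)
  have "hausdorff_content s \<delta> (f ` A) \<le> ennreal (L powr s) * (\<Sum>n. ennreal (diameter (C n) powr s))"
    using C(2) by (intro hausdorff_content_lipschitz_image_le_cover[OF f L(2) A s C(1)]) auto
  also have "\<dots> \<le> ennreal (L powr s) * (hausdorff_content s \<delta> A + ennreal (e / L powr s))"
    using C(3) by (intro mult_left_mono) auto
  also have "\<dots> = ennreal (L powr s) * hausdorff_content s \<delta> A + ennreal e"
    using Ls by (simp add: distrib_left ennreal_mult'[symmetric])
  finally show "hausdorff_content s \<delta> (f ` A) \<le> ennreal (L powr s) * hausdorff_content s \<delta> A + ennreal e" .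
qed

(* A cover whose total s-content is below eps^s consists of sets of diameter below eps. *)
lemma hausdorff_measure_eq_0_if_content_eq_0:
  assumes A: "hausdorff_content s \<delta> A = 0" and s: "0 < s"
  shows "hausdorff_measure s A = 0"
proof -
  have small: "hausdorff_content s \<epsilon> A \<le> ennreal e"
    if \<epsilon>: "0 < \<epsilon>" and e: "0 < e" "e < \<epsilon> powr s" for \<epsilon> e
  proof -
    have "hausdorff_content s \<delta> A < ennreal e"
      using A e by simp
    then obtain C where C: "A \<subseteq> (\<Union>n. C n)" "\<And>n. bounded (C n)"
      "(\<Sum>n. ennreal (diameter (C n) powr s)) < ennreal e"
      by (metis hausdorff_content_lessE)
    have "diameter (C n) \<le> \<epsilon>" for n
    proof (rule ccontr)
      assume "\<not> diameter (C n) \<le> \<epsilon>"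
      then have "\<epsilon> powr s \<le> diameter (C n) powr s"
        using \<epsilon> s by (intro powr_mono2) auto
      moreover have "diameter (C n) powr s < e"
        using ennreal_suminf_lessD[OF C(3)] by (simp add: ennreal_less_iff)
      ultimately show False
        using e by simp
    qed
    then have "hausdorff_content s \<epsilon> A \<le> (\<Sum>n. ennreal (diameter (C n) powr s))"
      using C by (intro hausdorff_content_le_cover)
    then show ?thesis
      using C(3) by simp
  qed
  have "hausdorff_content s \<epsilon> A \<le> 0" if \<epsilon>: "0 < \<epsilon>" for \<epsilon>
  proof (rule ennreal_le_epsilon)
    fix e :: real
    assume e: "0 < e"
    have "hausdorff_content s \<epsilon> A \<le> ennreal (min e (\<epsilon> powr s / 2))"
      using e \<epsilon> powr_gt_zero[of \<epsilon> s] by (intro small) (auto simp: min_less_iff_disj)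
    also have "\<dots> \<le> ennreal e"
      by (intro ennreal_leI) auto
    finally show "hausdorff_content s \<epsilon> A \<le> 0 + ennreal e"
      by simp
  qed
  then show ?thesis
    unfolding hausdorff_measure_def by simp
qed

lemma hausdorff_content_limsup_eq_0:
  fixes B :: "nat \<Rightarrow> real set" and b :: "nat \<Rightarrow> real"
  assumes b: "summable b" "\<And>n. 0 \<le> b n"
    and B: "\<And>n. N \<le> n \<Longrightarrow> hausdorff_content s \<delta> (B n) \<le> ennreal (b n)"
    and A: "\<And>x. x \<in> A \<Longrightarrow> infinite {n. x \<in> B n}"
  shows "hausdorff_content s \<delta> A = 0"
proof -
  have "hausdorff_content s \<delta> A \<le> 0 + ennreal r" if r: "0 < r" for r
  proof -
    obtain M where M: "\<And>m. M \<le> m \<Longrightarrow> norm (\<Sum>i. b (i + m)) < r"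
      using suminf_exist_split[OF r b(1)] by blast
    define M' where "M' = max M N"
    have "A \<subseteq> (\<Union>j. B (j + M'))"
    proof
      fix x
      assume "x \<in> A"
      then obtain n where "M' \<le> n" "x \<in> B n"
        using A[of x] unfolding infinite_nat_iff_unbounded_le by auto
      then show "x \<in> (\<Union>j. B (j + M'))"
        by (intro UN_I[of "n - M'"]) simp_all
    qed
    then have "hausdorff_content s \<delta> A \<le> hausdorff_content s \<delta> (\<Union>j. B (j + M'))"
      by (rule hausdorff_content_mono)
    also have "\<dots> \<le> (\<Sum>j. hausdorff_content s \<delta> (B (j + M')))"
      by (rule hausdorff_content_UN_le)
    also have "\<dots> \<le> (\<Sum>j. ennreal (b (j + M')))"
      by (intro suminf_le summableI B) (simp add: M'_def)
    also have "\<dots> = ennreal (\<Sum>j. b (j + M'))"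
    proof (rule suminf_ennreal2)
      show "summable (\<lambda>j. b (j + M'))"
        using summable_iff_shift[of b M'] b(1) by simp
    qed (rule b(2))
    also have "\<dots> \<le> ennreal r"
      using M[of M'] by (intro ennreal_leI) (simp add: M'_def)
    finally show ?thesis
      by simp
  qed
  then have "hausdorff_content s \<delta> A \<le> 0"
    by (rule ennreal_le_epsilon)
  then show ?thesis
    by simp
qed

lemma hausdorff_dim_le:
  assumes "0 \<le> T" "T < U" and "\<And>s. T < s \<Longrightarrow> s < U \<Longrightarrow> hausdorff_measure s A = 0"
  shows "hausdorff_dim A \<le> T"
  unfolding hausdorff_dim_def
proof (rule dense_ge_bounded[OF \<open>T < U\<close>])
  fix s
  assume "T < s" "s < U"
  then show "Inf {s. 0 \<le> s \<and> hausdorff_measure s A = 0} \<le> s"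
    using assms by (intro cInf_lower bdd_belowI[of _ 0]) auto
qed

section \<open>Inverse branches of the Gauss map and cylinders\<close>

definition cf_branch :: "nat \<Rightarrow> real \<Rightarrow> real" where
  "cf_branch b t = 1 / (real b + t)"

lemma cf_branch_lipschitz:
  assumes "1 \<le> b"
  shows "(1 / real b ^ 2)-lipschitz_on {0..1} (cf_branch b)"
proof (rule lipschitz_onI)
  fix x y :: real
  assume "x \<in> {0..1}" "y \<in> {0..1}"
  then have bx: "real b \<le> real b + x" "real b \<le> real b + y" and b: "1 \<le> real b"
    using assms by auto
  have "cf_branch b x - cf_branch b y = (y - x) / ((real b + x) * (real b + y))"
    using bx b by (simp add: cf_branch_def field_simps)
  then have "\<bar>cf_branch b x - cf_branch b y\<bar> = \<bar>x - y\<bar> / ((real b + x) * (real b + y))"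
    using bx b by (simp add: abs_minus_commute)
  also have "\<dots> \<le> \<bar>x - y\<bar> / (real b * real b)"
    using bx b by (intro divide_left_mono mult_mono) auto
  finally show "dist (cf_branch b x) (cf_branch b y) \<le> 1 / real b ^ 2 * dist x y"
    by (simp add: dist_real_def power2_eq_square)
qed simp

lemma hausdorff_content_cf_branch_image_le:
  assumes "1 \<le> b" "A \<subseteq> {0..1}" "0 \<le> s"
  shows "hausdorff_content s \<delta> (cf_branch b ` A)
    \<le> ennreal (real b powr (-2 * s)) * hausdorff_content s \<delta> A"
proof -
  have L: "0 < 1 / real b ^ 2" "1 / real b ^ 2 \<le> 1"
    using assms(1) by auto
  have "1 / real b ^ 2 = real b powr (-2)"
    using assms(1) by (simp add: powr_minus_divide powr_numeral)
  then have L_powr: "(1 / real b ^ 2) powr s = real b powr (-2 * s)"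
    by (simp add: powr_powr)
  from hausdorff_content_lipschitz_image_le[OF cf_branch_lipschitz[OF assms(1)] L assms(2,3)]
  show ?thesis
    unfolding L_powr .
qed

lemma gauss_map_irrational:
  assumes "0 < x" "x < 1" "x \<notin> \<rat>"
  shows "0 < gauss_map x" "gauss_map x < 1" "gauss_map x \<notin> \<rat>"
proof -
  have inv: "1 / x \<notin> \<rat>"
  proof
    assume "1 / x \<in> \<rat>"
    then have "1 / (1 / x) \<in> \<rat>"
      by (rule Rats_divide[OF Rats_1])
    then show False
      using assms by simp
  qed
  show "gauss_map x \<notin> \<rat>"
  proof
    assume "gauss_map x \<in> \<rat>"
    then have "gauss_map x + of_int \<lfloor>1 / x\<rfloor> \<in> \<rat>"
      by (intro Rats_add) auto
    then show False
      using inv by (simp add: gauss_map_def frac_def)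
  qed
  have "1 / x \<notin> \<int>"
    using inv Ints_subset_Rats by blast
  then show "0 < gauss_map x"
    using frac_ge_0[of "1 / x"] frac_eq_0_iff[of "1 / x"] by (simp add: gauss_map_def)
  show "gauss_map x < 1"
    by (simp add: gauss_map_def frac_lt_1)
qed

lemma cf_a_1: "cf_a 1 x = nat \<lfloor>1 / x\<rfloor>"
  by (simp add: cf_a_def)

lemma cf_a_Suc: "1 \<le> n \<Longrightarrow> cf_a (Suc n) x = cf_a n (gauss_map x)"
  by (cases n) (simp_all add: cf_a_def funpow_Suc_right del: funpow.simps)

lemma cf_a_1_pos:
  assumes "0 < x" "x < 1"
  shows "1 \<le> cf_a 1 x"
proof -
  have "1 < 1 / x"
    using assms by simp
  then show ?thesis
    unfolding cf_a_1 by linarith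
qed

lemma cf_branch_cf_a_1:
  assumes "0 < x" "x < 1"
  shows "cf_branch (cf_a 1 x) (gauss_map x) = x"
proof -
  have "1 < 1 / x"
    using assms by simp
  then have "0 \<le> \<lfloor>1 / x\<rfloor>"
    by linarith
  then have "real (cf_a 1 x) = of_int \<lfloor>1 / x\<rfloor>"
    unfolding cf_a_1 by simp
  then have "real (cf_a 1 x) + gauss_map x = 1 / x"
    by (simp add: gauss_map_def frac_def)
  then show ?thesis
    using assms by (simp add: cf_branch_def)
qed

lemma cf_AP_Suc: "1 \<le> n \<Longrightarrow> cf_AP x (Suc n) m \<longleftrightarrow> cf_AP (gauss_map x) n m"
  unfolding cf_AP_def by (simp add: cf_a_Suc)

lemma J_set_subset: "J_set \<subseteq> {0..1}"
  by (auto simp: J_set_def)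

lemma J_set_cf_a_1_pos: "x \<in> J_set \<Longrightarrow> 1 \<le> cf_a 1 x"
  unfolding J_set_def using cf_a_1_pos by blast

lemma J_set_cf_a_less:
  assumes "x \<in> J_set" "1 \<le> i" "i < j"
  shows "cf_a i x < cf_a j x"
proof -
  have "\<forall>n\<ge>1. cf_a n x < cf_a (Suc n) x"
    using assms(1) by (simp add: J_set_def)
  then have step: "cf_a (Suc k) x < cf_a (Suc (Suc k)) x" for k
    by auto
  have "i - 1 < j - 1"
    using assms(2,3) by simp
  from lift_Suc_mono_less[of "\<lambda>k. cf_a (Suc k) x", OF step this]
  show ?thesis
    using assms(2,3) by simp
qed

lemma gauss_map_J_set:
  assumes "x \<in> J_set"
  shows "gauss_map x \<in> J_set"
proof -
  have "cf_a n (gauss_map x) < cf_a (Suc n) (gauss_map x)" if "1 \<le> n" for n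
  proof -
    have "cf_a (Suc n) x < cf_a (Suc (Suc n)) x"
      using J_set_cf_a_less[OF assms] that by simp
    then show ?thesis
      using cf_a_Suc[of n x] cf_a_Suc[of "Suc n" x] that by simp
  qed
  moreover have "0 < gauss_map x" "gauss_map x < 1" "gauss_map x \<notin> \<rat>"
    using assms gauss_map_irrational unfolding J_set_def by auto
  ultimately show ?thesis
    unfolding J_set_def by blast
qed

definition J_cylinder :: "nat \<Rightarrow> (nat \<Rightarrow> nat) \<Rightarrow> real set" where
  "J_cylinder m q = {x \<in> J_set. \<forall>i<m. cf_a (Suc i) x = q i}"

lemma J_cylinder_Suc_subset:
  "J_cylinder (Suc m) q \<subseteq> cf_branch (q 0) ` J_cylinder m (\<lambda>i. q (Suc i))"
proof
  fix x
  assume "x \<in> J_cylinder (Suc m) q"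
  then have J: "x \<in> J_set" and q: "\<And>i. i < Suc m \<Longrightarrow> cf_a (Suc i) x = q i"
    by (auto simp: J_cylinder_def)
  have "cf_a (Suc i) (gauss_map x) = q (Suc i)" if "i < m" for i
    using q[of "Suc i"] cf_a_Suc[of "Suc i" x] that by simp
  then have "gauss_map x \<in> J_cylinder m (\<lambda>i. q (Suc i))"
    using gauss_map_J_set[OF J] by (simp add: J_cylinder_def)
  moreover have "x = cf_branch (q 0) (gauss_map x)"
    using cf_branch_cf_a_1[of x] J q[of 0] by (simp add: J_set_def)
  ultimately show "x \<in> cf_branch (q 0) ` J_cylinder m (\<lambda>i. q (Suc i))"
    by blast
qed

lemma hausdorff_content_J_cylinder_le:
  assumes s: "0 \<le> s"
  shows "hausdorff_content s 1 (J_cylinder m q) \<le> ennreal (\<Prod>i<m. real (q i) powr (-2 * s))"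
proof (induction m arbitrary: q)
  case 0
  have "hausdorff_content s 1 (J_cylinder 0 q) \<le> hausdorff_content s 1 {0..1}"
    using J_set_subset by (intro hausdorff_content_mono) (auto simp: J_cylinder_def)
  also have "\<dots> \<le> ennreal (diameter {0..1::real} powr s)"
    by (rule hausdorff_content_le_diameter) (simp_all add: diameter_closed_interval)
  finally show ?case
    by (simp add: diameter_closed_interval)
next
  case (Suc m)
  show ?case
  proof (cases "q 0 = 0")
    case True
    have "cf_a 1 x = q 0" "x \<in> J_set" if "x \<in> J_cylinder (Suc m) q" for x
      using that by (auto simp: J_cylinder_def)
    then have "J_cylinder (Suc m) q = {}"
      using J_set_cf_a_1_pos True by fastforce
    then show ?thesis
      by simp
  next
    case False
    have "hausdorff_content s 1 (J_cylinder (Suc m) q)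
        \<le> hausdorff_content s 1 (cf_branch (q 0) ` J_cylinder m (\<lambda>i. q (Suc i)))"
      by (rule hausdorff_content_mono[OF J_cylinder_Suc_subset])
    also have "\<dots> \<le> ennreal (real (q 0) powr (-2 * s)) * hausdorff_content s 1 (J_cylinder m (\<lambda>i. q (Suc i)))"
      using False s J_set_subset
      by (intro hausdorff_content_cf_branch_image_le) (auto simp: J_cylinder_def)
    also have "\<dots> \<le> ennreal (real (q 0) powr (-2 * s)) * ennreal (\<Prod>i<m. real (q (Suc i)) powr (-2 * s))"
      by (intro mult_left_mono Suc.IH) simp
    also have "\<dots> = ennreal (\<Prod>i<Suc m. real (q i) powr (-2 * s))"
      unfolding prod.lessThan_Suc_shift by (simp add: ennreal_mult prod_nonneg)
    finally show ?thesis .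
  qed
qed

section \<open>Progressions of partial quotients\<close>

definition J_AP :: "nat \<Rightarrow> nat \<Rightarrow> real set" where
  "J_AP n m = {x \<in> J_set. cf_AP x n m}"

definition J_AP_cell :: "nat \<Rightarrow> nat \<Rightarrow> nat \<Rightarrow> nat \<Rightarrow> real set" where
  "J_AP_cell n m c a = {x \<in> J_AP n m. c < cf_a 1 x \<and> cf_a n x = a}"

lemma J_AP_subset_UN_cell: "J_AP n m \<subseteq> (\<Union>a. J_AP_cell n m 0 a)"
proof
  fix x
  assume "x \<in> J_AP n m"
  then have "x \<in> J_AP_cell n m 0 (cf_a n x)"
    using J_set_cf_a_1_pos[of x] by (auto simp: J_AP_def J_AP_cell_def)
  then show "x \<in> (\<Union>a. J_AP_cell n m 0 a)"
    by blast
qed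

lemma J_AP_cell_Suc_subset:
  assumes n: "1 \<le> n"
  shows "J_AP_cell (Suc n) m c a \<subseteq> (\<Union>b\<in>{c<..<a}. cf_branch b ` J_AP_cell n m b a)"
proof
  fix x
  assume "x \<in> J_AP_cell (Suc n) m c a"
  then have J: "x \<in> J_set" and c: "c < cf_a 1 x" and a: "cf_a (Suc n) x = a"
    and AP: "cf_AP x (Suc n) m"
    by (auto simp: J_AP_cell_def J_AP_def)
  define b where "b = cf_a 1 x"
  have "b < cf_a 2 x"
    using J_set_cf_a_less[OF J, of 1 2] by (simp add: b_def)
  also have "cf_a 2 x = cf_a 1 (gauss_map x)"
    using cf_a_Suc[of 1 x] by (simp add: numeral_2_eq_2)
  finally have "gauss_map x \<in> J_AP_cell n m b a"
    using gauss_map_J_set[OF J] AP a n cf_a_Suc[OF n, of x]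
    by (simp add: J_AP_cell_def J_AP_def cf_AP_Suc)
  moreover have "b \<in> {c<..<a}"
    using c a J_set_cf_a_less[OF J, of 1 "Suc n"] n by (simp add: b_def)
  moreover have "x = cf_branch b (gauss_map x)"
    using cf_branch_cf_a_1[of x] J by (simp add: J_set_def b_def)
  ultimately show "x \<in> (\<Union>b\<in>{c<..<a}. cf_branch b ` J_AP_cell n m b a)"
    by blast
qed

lemma hausdorff_content_J_AP_cell_Suc_le:
  assumes "1 \<le> n" "0 \<le> s"
  shows "hausdorff_content s 1 (J_AP_cell (Suc n) m c a)
    \<le> (\<Sum>b\<in>{c<..<a}. ennreal (real b powr (-2 * s)) * hausdorff_content s 1 (J_AP_cell n m b a))"
proof -
  have "hausdorff_content s 1 (J_AP_cell (Suc n) m c a)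
      \<le> hausdorff_content s 1 (\<Union>b\<in>{c<..<a}. cf_branch b ` J_AP_cell n m b a)"
    by (intro hausdorff_content_mono J_AP_cell_Suc_subset assms(1))
  also have "\<dots> \<le> (\<Sum>b\<in>{c<..<a}. hausdorff_content s 1 (cf_branch b ` J_AP_cell n m b a))"
    by (intro hausdorff_content_UN_finite_le) auto
  also have "\<dots> \<le> (\<Sum>b\<in>{c<..<a}. ennreal (real b powr (-2 * s)) * hausdorff_content s 1 (J_AP_cell n m b a))"
    using assms(2) J_set_subset
    by (intro sum_mono hausdorff_content_cf_branch_image_le) (auto simp: J_AP_cell_def J_AP_def)
  finally show ?thesis .
qed

lemma hausdorff_content_J_AP_cell_le:
  assumes s: "0 \<le> s"
  shows "hausdorff_content s 1 (J_AP_cell (Suc k) m c a)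
    \<le> ennreal ((\<Sum>b\<in>{c<..<a}. real b powr (-2 * s)) ^ k / fact k)
        * hausdorff_content s 1 (J_AP_cell 1 m 0 a)"
proof (induction k arbitrary: c)
  case 0
  have "J_AP_cell 1 m c a \<subseteq> J_AP_cell 1 m 0 a"
    by (auto simp: J_AP_cell_def)
  then show ?case
    by (simp add: hausdorff_content_mono)
next
  case (Suc k)
  define w where "w b = real b powr (-2 * s)" for b :: nat
  define W where "W c = (\<Sum>b\<in>{c<..<a}. w b)" for c
  define H where "H = hausdorff_content s 1 (J_AP_cell 1 m 0 a)"
  have w: "0 \<le> w b" for b
    by (simp add: w_def)
  have "hausdorff_content s 1 (J_AP_cell (Suc (Suc k)) m c a)
      \<le> (\<Sum>b\<in>{c<..<a}. ennreal (w b) * hausdorff_content s 1 (J_AP_cell (Suc k) m b a))"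
    unfolding w_def using s by (intro hausdorff_content_J_AP_cell_Suc_le) simp_all
  also have "\<dots> \<le> (\<Sum>b\<in>{c<..<a}. ennreal (w b * (W b ^ k / fact k)) * H)"
  proof (intro sum_mono)
    fix b
    have "ennreal (w b) * hausdorff_content s 1 (J_AP_cell (Suc k) m b a)
        \<le> ennreal (w b) * (ennreal (W b ^ k / fact k) * H)"
      using Suc.IH unfolding W_def w_def H_def by (rule mult_left_mono) simp
    also have "\<dots> = ennreal (w b * (W b ^ k / fact k)) * H"
      by (simp only: ennreal_mult'[OF w] mult.assoc)
    finally show "ennreal (w b) * hausdorff_content s 1 (J_AP_cell (Suc k) m b a)
        \<le> ennreal (w b * (W b ^ k / fact k)) * H" .
  qed
  also have "\<dots> = ennreal (\<Sum>b\<in>{c<..<a}. w b * (W b ^ k / fact k)) * H"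
    unfolding sum_distrib_right[symmetric] using w by (subst sum_ennreal) (auto simp: W_def sum_nonneg)
  also have "\<dots> \<le> ennreal (W c ^ Suc k / fact (Suc k)) * H"
  proof (intro mult_right_mono ennreal_leI)
    have "(\<Sum>b\<in>{c<..<a}. w b * (W b ^ k / fact k)) = (\<Sum>b\<in>{c<..<a}. w b * W b ^ k) / fact k"
      by (simp add: sum_divide_distrib)
    also have "\<dots> \<le> W c ^ Suc k / real (Suc k) / fact k"
      unfolding W_def by (intro divide_right_mono sum_mult_tail_power_le w) simp
    also have "\<dots> = W c ^ Suc k / fact (Suc k)"
      by (simp add: field_simps)
    finally show "(\<Sum>b\<in>{c<..<a}. w b * (W b ^ k / fact k)) \<le> W c ^ Suc k / fact (Suc k)" .
  qed simp
  finally show ?case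
    unfolding W_def w_def H_def .
qed

lemma hausdorff_content_J_AP_le:
  assumes "0 \<le> s"
  shows "hausdorff_content s 1 (J_AP (Suc k) m)
    \<le> (\<Sum>a. ennreal ((\<Sum>b\<in>{0<..<a}. real b powr (-2 * s)) ^ k / fact k)
            * hausdorff_content s 1 (J_AP_cell 1 m 0 a))"
proof -
  have "hausdorff_content s 1 (J_AP (Suc k) m) \<le> hausdorff_content s 1 (\<Union>a. J_AP_cell (Suc k) m 0 a)"
    by (rule hausdorff_content_mono[OF J_AP_subset_UN_cell])
  also have "\<dots> \<le> (\<Sum>a. hausdorff_content s 1 (J_AP_cell (Suc k) m 0 a))"
    by (rule hausdorff_content_UN_le)
  also have "\<dots> \<le> (\<Sum>a. ennreal ((\<Sum>b\<in>{0<..<a}. real b powr (-2 * s)) ^ k / fact k)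
            * hausdorff_content s 1 (J_AP_cell 1 m 0 a))"
    by (intro suminf_le summableI hausdorff_content_J_AP_cell_le assms)
  finally show ?thesis .
qed

lemma hausdorff_content_J_AP_cell_1_le:
  assumes "0 \<le> s"
  shows "hausdorff_content s 1 (J_AP_cell 1 m 0 a) \<le> ennreal (real a powr (-2 * s))"
proof -
  have "J_AP_cell 1 m 0 a \<subseteq> J_cylinder 1 (\<lambda>_. a)"
    by (auto simp: J_AP_cell_def J_AP_def J_cylinder_def)
  then have "hausdorff_content s 1 (J_AP_cell 1 m 0 a) \<le> hausdorff_content s 1 (J_cylinder 1 (\<lambda>_. a))"
    by (rule hausdorff_content_mono)
  also have "\<dots> \<le> ennreal (real a powr (-2 * s))"
    using hausdorff_content_J_cylinder_le[OF assms, of 1 "\<lambda>_. a"] by simp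
  finally show ?thesis .
qed

lemma J_AP_cell_1_subset_UN_J_cylinder:
  assumes m: "2 \<le> m"
  shows "J_AP_cell 1 m 0 a \<subseteq> (\<Union>d. J_cylinder m (\<lambda>i. a + i * Suc d))"
proof
  fix x
  assume "x \<in> J_AP_cell 1 m 0 a"
  then have J: "x \<in> J_set" and a: "cf_a 1 x = a" and AP: "cf_AP x 1 m"
    by (auto simp: J_AP_cell_def J_AP_def)
  obtain D :: int where D: "\<And>i. i < m \<Longrightarrow> int (cf_a (1 + i) x) = int a + int i * D"
    using AP a unfolding cf_AP_def by blast
  have "int (cf_a 2 x) = int a + D"
    using D[of 1] m by (simp add: numeral_2_eq_2)
  moreover have "cf_a 1 x < cf_a 2 x"
    using J_set_cf_a_less[OF J, of 1 2] by simp
  ultimately have "1 \<le> D"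
    using a by linarith
  define d where "d = nat (D - 1)"
  have d: "D = int (Suc d)"
    using \<open>1 \<le> D\<close> by (simp add: d_def)
  have "cf_a (Suc i) x = a + i * Suc d" if "i < m" for i
  proof -
    have "int (cf_a (Suc i) x) = int (a + i * Suc d)"
      using D[OF that] d by (simp add: algebra_simps)
    then show ?thesis
      by linarith
  qed
  then have "x \<in> J_cylinder m (\<lambda>i. a + i * Suc d)"
    using J by (simp add: J_cylinder_def)
  then show "x \<in> (\<Union>d. J_cylinder m (\<lambda>i. a + i * Suc d))"
    by blast
qed

lemma hausdorff_content_J_AP_cell_1_le_AP:
  assumes s: "0 \<le> s" and K: "2 \<le> 2 * s * real K" "K < m"
  shows "hausdorff_content s 1 (J_AP_cell 1 m 0 a)
    \<le> ennreal (real a powr (-2 * s * real (m - K)) * (\<Sum>n. real n powr (-2)))"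
proof -
  define c where "c = real a powr (-2 * s * real (m - K))"
  have "1 \<le> K"
    using K(1) by (cases K) auto
  have summable: "summable (\<lambda>n. real n powr (-2))"
    by (simp add: summable_real_powr_iff)
  then have summable_Suc: "summable (\<lambda>d. real (Suc d) powr (-2))"
    by (subst summable_Suc_iff)
  have "hausdorff_content s 1 (J_AP_cell 1 m 0 a)
      \<le> hausdorff_content s 1 (\<Union>d. J_cylinder m (\<lambda>i. a + i * Suc d))"
    using \<open>1 \<le> K\<close> K(2) by (intro hausdorff_content_mono J_AP_cell_1_subset_UN_J_cylinder) simp
  also have "\<dots> \<le> (\<Sum>d. hausdorff_content s 1 (J_cylinder m (\<lambda>i. a + i * Suc d)))"
    by (rule hausdorff_content_UN_le)
  also have "\<dots> \<le> (\<Sum>d. ennreal (c * real (Suc d) powr (-2)))"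
  proof (intro suminf_le summableI)
    fix d
    show "hausdorff_content s 1 (J_cylinder m (\<lambda>i. a + i * Suc d)) \<le> ennreal (c * real (Suc d) powr (-2))"
      using hausdorff_content_J_cylinder_le[OF s] prod_AP_powr_le[OF s K] unfolding c_def
      by (meson ennreal_leI order_trans)
  qed
  also have "\<dots> = ennreal (\<Sum>d. c * real (Suc d) powr (-2))"
    using summable_Suc by (intro suminf_ennreal2 summable_mult) (simp_all add: c_def)
  also have "(\<Sum>d. c * real (Suc d) powr (-2)) = c * (\<Sum>d. real (Suc d) powr (-2))"
    by (rule suminf_mult[OF summable_Suc])
  also have "(\<Sum>d. real (Suc d) powr (-2)) = (\<Sum>n. real n powr (-2))"
    using suminf_split_head[OF summable] by simp
  finally show ?thesis
    unfolding c_def .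
qed

section \<open>Hausdorff dimension of F_set\<close>

lemma hausdorff_content_J_AP_le_above_half:
  assumes s: "1/2 < s"
  shows "hausdorff_content s 1 (J_AP (Suc k) m)
    \<le> ennreal ((\<Sum>n. real n powr (-2 * s)) ^ Suc k / fact k)"
proof -
  define Z where "Z = (\<Sum>n. real n powr (-2 * s))"
  have summable: "summable (\<lambda>n. real n powr (-2 * s))"
    using s by (subst summable_real_powr_iff) auto
  have Z: "0 \<le> Z"
    unfolding Z_def by (intro suminf_nonneg summable) simp
  have sum_le_Z: "(\<Sum>b\<in>{0<..<a}. real b powr (-2 * s)) \<le> Z" for a
    unfolding Z_def by (intro sum_le_suminf summable) auto
  have "hausdorff_content s 1 (J_AP (Suc k) m)
      \<le> (\<Sum>a. ennreal ((\<Sum>b\<in>{0<..<a}. real b powr (-2 * s)) ^ k / fact k)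
          * hausdorff_content s 1 (J_AP_cell 1 m 0 a))"
    using s by (intro hausdorff_content_J_AP_le) simp
  also have "\<dots> \<le> ennreal (Z ^ k / fact k * Z)"
  proof (rule suminf_ennreal_le_mult_suminf[OF summable, of "Z ^ k / fact k", folded Z_def])
    fix a
    have "ennreal ((\<Sum>b\<in>{0<..<a}. real b powr (-2 * s)) ^ k / fact k)
          * hausdorff_content s 1 (J_AP_cell 1 m 0 a)
        \<le> ennreal (Z ^ k / fact k) * ennreal (real a powr (-2 * s))"
      using s sum_le_Z
      by (intro mult_mono ennreal_leI divide_right_mono power_mono sum_nonneg
          hausdorff_content_J_AP_cell_1_le) auto
    also have "\<dots> = ennreal (Z ^ k / fact k * real a powr (-2 * s))"
      using Z by (intro ennreal_mult'[symmetric]) simp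
    finally show "ennreal ((\<Sum>b\<in>{0<..<a}. real b powr (-2 * s)) ^ k / fact k)
          * hausdorff_content s 1 (J_AP_cell 1 m 0 a)
        \<le> ennreal (Z ^ k / fact k * real a powr (-2 * s))" .
  qed (use Z in simp_all)
  also have "Z ^ k / fact k * Z = Z ^ Suc k / fact k"
    by (simp add: mult.commute)
  finally show ?thesis
    unfolding Z_def .
qed

lemma hausdorff_content_J_set_above_half:
  assumes "1/2 < s"
  shows "hausdorff_content s 1 J_set = 0"
proof -
  define Z where "Z = (\<Sum>n. real n powr (-2 * s))"
  have "0 \<le> Z"
    unfolding Z_def using assms by (intro suminf_nonneg) (simp_all add: summable_real_powr_iff)
  moreover have "summable (\<lambda>k. Z ^ Suc k / fact k)"
    using summable_power_div_fact[of Z Z] by (simp only: power_Suc)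
  moreover have "infinite {k. x \<in> J_AP (Suc k) 0}" if "x \<in> J_set" for x
  proof -
    have "{k. x \<in> J_AP (Suc k) 0} = UNIV"
      using that by (auto simp: J_AP_def cf_AP_def)
    then show ?thesis
      by simp
  qed
  ultimately show ?thesis
    using hausdorff_content_J_AP_le_above_half[OF assms, of _ 0]
    by (intro hausdorff_content_limsup_eq_0[where b = "\<lambda>k. Z ^ Suc k / fact k" and N = 0])
      (simp_all add: Z_def)
qed

lemma hausdorff_content_J_AP_term_le_below_half:
  assumes s: "0 < s" "s < 1/2" and K: "2 \<le> 2 * s * real K" "K < m"
    and E: "(1 - 2 * s) * real k - 2 * s * real (m - K) \<le> -2"
  shows "ennreal ((\<Sum>b\<in>{0<..<a}. real b powr (-2 * s)) ^ k / fact k)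
        * hausdorff_content s 1 (J_AP_cell 1 m 0 a)
    \<le> ennreal ((\<Sum>n. real n powr (-2)) * (1 / (1 - 2 * s)) ^ k / fact k * real a powr (-2))"
proof -
  define W where "W = (\<Sum>b\<in>{0<..<a}. real b powr (-2 * s))"
  define P where "P = real a powr (-2 * s * real (m - K))"
  define Z where "Z = (\<Sum>n. real n powr (-2))"
  have Z: "0 \<le> Z"
    unfolding Z_def by (intro suminf_nonneg) (simp_all add: summable_real_powr_iff)
  have W: "0 \<le> W"
    unfolding W_def by (simp add: sum_nonneg)
  have "ennreal (W ^ k / fact k) * hausdorff_content s 1 (J_AP_cell 1 m 0 a)
      \<le> ennreal (W ^ k / fact k) * ennreal (P * Z)"
    using s K unfolding P_def Z_def
    by (intro mult_left_mono hausdorff_content_J_AP_cell_1_le_AP) auto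
  also have "\<dots> = ennreal (W ^ k / fact k * (P * Z))"
    using W by (intro ennreal_mult'[symmetric]) simp
  also have "\<dots> \<le> ennreal (Z * (1 / (1 - 2 * s)) ^ k / fact k * real a powr (-2))"
  proof (rule ennreal_leI)
    have "W ^ k / fact k * (P * Z) = W ^ k * P * (Z / fact k)"
      by simp
    also have "\<dots> \<le> (1 / (1 - 2 * s)) ^ k * real a powr (-2) * (Z / fact k)"
      using sum_powr_power_mult_le[OF s E] Z unfolding W_def P_def
      by (intro mult_right_mono) auto
    also have "\<dots> = Z * (1 / (1 - 2 * s)) ^ k / fact k * real a powr (-2)"
      by simp
    finally show "W ^ k / fact k * (P * Z) \<le> Z * (1 / (1 - 2 * s)) ^ k / fact k * real a powr (-2)" .
  qed
  finally show ?thesis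
    unfolding W_def Z_def .
qed

lemma hausdorff_content_J_AP_le_below_half:
  assumes s: "0 < s" "s < 1/2" and K: "2 \<le> 2 * s * real K"
    and E: "(1 - 2 * s) * real k - 2 * s * real (m - K) \<le> -2"
  shows "hausdorff_content s 1 (J_AP (Suc k) m)
    \<le> ennreal ((\<Sum>n. real n powr (-2)) ^ 2 * (1 / (1 - 2 * s)) ^ k / fact k)"
proof -
  define Z where "Z = (\<Sum>n. real n powr (-2))"
  have summable: "summable (\<lambda>n. real n powr (-2))"
    by (simp add: summable_real_powr_iff)
  have Z: "0 \<le> Z"
    unfolding Z_def by (intro suminf_nonneg summable) simp
  have "K < m"
  proof (rule ccontr)
    assume "\<not> K < m"
    then have "(1 - 2 * s) * real k \<le> -2"
      using E by simp
    moreover have "0 \<le> (1 - 2 * s) * real k"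
      using s by simp
    ultimately show False
      by simp
  qed
  have "hausdorff_content s 1 (J_AP (Suc k) m)
      \<le> (\<Sum>a. ennreal ((\<Sum>b\<in>{0<..<a}. real b powr (-2 * s)) ^ k / fact k)
          * hausdorff_content s 1 (J_AP_cell 1 m 0 a))"
    using s by (intro hausdorff_content_J_AP_le) simp
  also have "\<dots> \<le> ennreal (Z * (1 / (1 - 2 * s)) ^ k / fact k * Z)"
    using s Z hausdorff_content_J_AP_term_le_below_half[OF s K \<open>K < m\<close> E]
    by (intro suminf_ennreal_le_mult_suminf[OF summable, folded Z_def]) (simp_all add: Z_def)
  also have "Z * (1 / (1 - 2 * s)) ^ k / fact k * Z = Z ^ 2 * (1 / (1 - 2 * s)) ^ k / fact k"
    by (simp add: power2_eq_square)
  finally show ?thesis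
    unfolding Z_def .
qed

lemma F_set_infinite_J_AP:
  assumes "x \<in> F_set \<nu>"
  shows "infinite {k. x \<in> J_AP (Suc k) (\<nu> (Suc k))}"
proof
  assume fin: "finite {k. x \<in> J_AP (Suc k) (\<nu> (Suc k))}"
  have sub: "{n. n \<ge> 1 \<and> cf_AP x n (\<nu> n)} \<subseteq> Suc ` {k. x \<in> J_AP (Suc k) (\<nu> (Suc k))}"
  proof
    fix n
    assume n: "n \<in> {n. n \<ge> 1 \<and> cf_AP x n (\<nu> n)}"
    then have "n = Suc (n - 1)"
      by simp
    moreover have "x \<in> J_AP (Suc (n - 1)) (\<nu> (Suc (n - 1)))"
      using n assms by (auto simp: J_AP_def F_set_def)
    ultimately show "n \<in> Suc ` {k. x \<in> J_AP (Suc k) (\<nu> (Suc k))}"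
      by blast
  qed
  have "finite {n. n \<ge> 1 \<and> cf_AP x n (\<nu> n)}"
    using finite_subset[OF sub finite_imageI[OF fin]] .
  then show False
    using assms by (simp add: F_set_def)
qed

lemma eventually_AP_exponent_le:
  assumes s: "0 < s" "s < 1/2" and \<beta>: "1 / (2 * s) - 1 < \<beta>"
    and \<nu>: "\<And>n. N \<le> n \<Longrightarrow> \<beta> * real n \<le> real (\<nu> n)"
  shows "\<forall>\<^sub>F k in sequentially. (1 - 2 * s) * real k - 2 * s * real (\<nu> (Suc k) - K) \<le> -2"
proof -
  define \<eta> where "\<eta> = 2 * s * (1 + \<beta>) - 1"
  have \<eta>: "0 < \<eta>"
    using \<beta> s by (simp add: \<eta>_def field_simps)
  have "1 < 1 / (2 * s)"
    using s by (simp add: field_simps)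
  with \<beta> have \<beta>0: "0 \<le> \<beta>"
    by linarith
  obtain M :: nat where M: "(2 + 2 * s * real K) / \<eta> \<le> real M"
    using real_arch_simple by blast
  have "(1 - 2 * s) * real k - 2 * s * real (\<nu> (Suc k) - K) \<le> -2" if k: "max N M \<le> k" for k
  proof -
    have "\<beta> * real (Suc k) - real K \<le> real (\<nu> (Suc k) - K)"
      using \<nu>[of "Suc k"] k by linarith
    then have "2 * s * (\<beta> * real (Suc k) - real K) \<le> 2 * s * real (\<nu> (Suc k) - K)"
      using s by (intro mult_left_mono) auto
    moreover have "2 + 2 * s * real K \<le> \<eta> * real M"
      using M \<eta> by (simp add: pos_divide_le_eq mult.commute)
    moreover have "\<eta> * real M \<le> \<eta> * real k"
      using k \<eta> by (intro mult_left_mono) auto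
    moreover have "(1 - 2 * s) * real k - 2 * s * (\<beta> * real (Suc k) - real K)
        = - \<eta> * real k - 2 * s * \<beta> + 2 * s * real K"
      by (simp add: \<eta>_def algebra_simps)
    moreover have "0 \<le> s * \<beta>"
      using s \<beta>0 by simp
    ultimately show ?thesis
      by linarith
  qed
  then show ?thesis
    unfolding eventually_sequentially by blast
qed

lemma hausdorff_content_F_set_below_half:
  assumes s: "0 < s" "s < 1/2" and \<beta>: "1 / (2 * s) - 1 < \<beta>"
    and \<nu>: "\<And>n. N \<le> n \<Longrightarrow> \<beta> * real n \<le> real (\<nu> n)"
  shows "hausdorff_content s 1 (F_set \<nu>) = 0"
proof -
  define K where "K = nat \<lceil>1 / s\<rceil>"
  have "1 / s \<le> real K"
    unfolding K_def by linarith
  then have K: "2 \<le> 2 * s * real K"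
    using s by (simp add: field_simps)
  have "\<forall>\<^sub>F k in sequentially. (1 - 2 * s) * real k - 2 * s * real (\<nu> (Suc k) - K) \<le> -2"
    by (rule eventually_AP_exponent_le[OF s \<beta> \<nu>])
  then obtain M where E: "\<And>k. M \<le> k \<Longrightarrow> (1 - 2 * s) * real k - 2 * s * real (\<nu> (Suc k) - K) \<le> -2"
    unfolding eventually_sequentially by blast
  show ?thesis
  proof (rule hausdorff_content_limsup_eq_0)
    show "summable (\<lambda>k. (\<Sum>n. real n powr (-2)) ^ 2 * (1 / (1 - 2 * s)) ^ k / fact k)"
      by (rule summable_power_div_fact)
    show "0 \<le> (\<Sum>n. real n powr (-2)) ^ 2 * (1 / (1 - 2 * s)) ^ k / fact k" for k
      using s by simp
    show "hausdorff_content s 1 (J_AP (Suc k) (\<nu> (Suc k)))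
        \<le> ennreal ((\<Sum>n. real n powr (-2)) ^ 2 * (1 / (1 - 2 * s)) ^ k / fact k)"
      if "M \<le> k" for k
      using hausdorff_content_J_AP_le_below_half[OF s K E[OF that]] .
  qed (rule F_set_infinite_J_AP)
qed

lemma hausdorff_measure_F_set_above_half:
  assumes "1/2 < s"
  shows "hausdorff_measure s (F_set \<nu>) = 0"
proof -
  have "F_set \<nu> \<subseteq> J_set"
    by (auto simp: F_set_def)
  then have "hausdorff_content s 1 (F_set \<nu>) = 0"
    using hausdorff_content_mono[of "F_set \<nu>" J_set s 1] hausdorff_content_J_set_above_half[OF assms]
    by simp
  then show ?thesis
    using assms by (intro hausdorff_measure_eq_0_if_content_eq_0) auto
qed

lemma hausdorff_measure_F_set_below_half:
  assumes s: "0 < s" "s < 1/2"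
    and liminf: "ereal (1 / (2 * s) - 1) < liminf (\<lambda>n. ereal (real (\<nu> n) / real n))"
  shows "hausdorff_measure s (F_set \<nu>) = 0"
proof -
  obtain \<beta> where \<beta>: "1 / (2 * s) - 1 < \<beta>" "ereal \<beta> < liminf (\<lambda>n. ereal (real (\<nu> n) / real n))"
    using ereal_dense2[OF liminf] by auto
  then have "\<forall>\<^sub>F n in sequentially. ereal \<beta> < ereal (real (\<nu> n) / real n)"
    by (intro less_LiminfD) simp
  then obtain N where N: "\<And>n. N \<le> n \<Longrightarrow> \<beta> < real (\<nu> n) / real n"
    unfolding eventually_sequentially by auto
  have "\<beta> * real n \<le> real (\<nu> n)" if "max N 1 \<le> n" for n
    using N[of n] that by (simp add: pos_less_divide_eq less_imp_le)
  then have "hausdorff_content s 1 (F_set \<nu>) = 0"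
    by (rule hausdorff_content_F_set_below_half[OF s \<beta>(1)])
  then show ?thesis
    using s by (intro hausdorff_measure_eq_0_if_content_eq_0) auto
qed

lemma hausdorff_dim_F_set_le:
  assumes r: "0 \<le> r" "ereal r \<le> liminf (\<lambda>n. ereal (real (\<nu> n) / real n))"
  shows "hausdorff_dim (F_set \<nu>) \<le> 1 / (2 * (1 + r))"
proof (cases "r = 0")
  case True
  then show ?thesis
    by (intro hausdorff_dim_le[of _ 1] hausdorff_measure_F_set_above_half) auto
next
  case False
  show ?thesis
  proof (rule hausdorff_dim_le[of _ "1/2"])
    fix s
    assume s: "1 / (2 * (1 + r)) < s" "s < 1/2"
    have "0 < 1 / (2 * (1 + r))"
      using r by simp
    with s have "0 < s"
      by linarith
    with s r have "1 / (2 * s) - 1 < r"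
      by (simp add: field_simps)
    then have "ereal (1 / (2 * s) - 1) < ereal r"
      by simp
    then have "ereal (1 / (2 * s) - 1) < liminf (\<lambda>n. ereal (real (\<nu> n) / real n))"
      using r(2) by (rule order.strict_trans2)
    then show "hausdorff_measure s (F_set \<nu>) = 0"
      by (rule hausdorff_measure_F_set_below_half[OF \<open>0 < s\<close> s(2)])
  qed (use r False in \<open>auto simp: field_simps\<close>)
qed

theorem proposition3p1:
  fixes \<nu> :: "nat \<Rightarrow> nat" and \<alpha> :: ereal
  assumes incr: "\<forall>n\<ge>1. \<nu> n \<le> \<nu> (Suc n)"
    and pos: "\<forall>n\<ge>1. 0 < \<nu> n"
    and alpha: "\<alpha> = liminf (\<lambda>n. ereal (real (\<nu> n) / real n))"
  shows "hausdorff_dim (F_set \<nu>) \<le>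
           (if \<alpha> = \<infinity> then 0 else 1 / (2 * (1 + real_of_ereal \<alpha>)))"
proof -
  have "0 \<le> \<alpha>"
    unfolding alpha by (intro Liminf_bounded) auto
  then consider "\<alpha> = \<infinity>" | r where "\<alpha> = ereal r" "0 \<le> r"
    by (cases \<alpha>) auto
  then show ?thesis
  proof cases
    case 1
    then have "hausdorff_dim (F_set \<nu>) \<le> 0"
      using alpha by (intro hausdorff_dim_le[of 0 "1/2"] hausdorff_measure_F_set_below_half) auto
    with 1 show ?thesis
      by simp
  next
    case (2 r)
    then show ?thesis
      using alpha hausdorff_dim_F_set_le[of r \<nu>] by simp
  qed
qed

end
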